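(* For every hypergraph $H$ with $n\ge1$ vertices, $\mathrm{ch}_{cf}(H)\le\chi_{cf}(H)\cdot\ln n+1$.
   Context: A coloring $C\colon V\to\mathbb Z_{>0}$ of a hypergraph $H=(V,\mathcal E)$ (nonempty hyperedges) is conflict-free if every hyperedge contains a vertex whose color appears exactly once in it. $\chi_{cf}(H)$ is the minimum number of colors in a conflict-free coloring of $H$. $\mathrm{ch}_{cf}(H)$ is the minimum $k$ such that for every family $\{L_v\}_{v\in V}$ of sets of positive integers with $|L_v|\ge k$ there is a conflict-free coloring $C$ with $C(v)\in L_v$ for all $v$. *)

theory Defs
  imports Complex_Main
begin

definition hypergraph :: "'a set \<Rightarrow> 'a set set \<Rightarrow> bool" where
  "hypergraph V E \<longleftrightarrow> (\<forall>e\<in>E. e \<noteq> {} \<and> e \<subseteq> V)"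

definition conflict_free :: "'a set set \<Rightarrow> ('a \<Rightarrow> nat) \<Rightarrow> bool" where
  "conflict_free E C \<longleftrightarrow> (\<forall>e\<in>E. \<exists>v\<in>e. \<forall>u\<in>e. C u = C v \<longrightarrow> u = v)"

definition chi_cf :: "'a set \<Rightarrow> 'a set set \<Rightarrow> nat" where
  "chi_cf V E = (LEAST k. \<exists>C. (\<forall>v\<in>V. C v > 0) \<and> card (C ` V) = k \<and> conflict_free E C)"

definition ch_cf :: "'a set \<Rightarrow> 'a set set \<Rightarrow> nat" where
  "ch_cf V E = (LEAST k. \<forall>L :: 'a \<Rightarrow> nat set.
      (\<forall>v\<in>V. L v \<subseteq> {0<..} \<and> (infinite (L v) \<or> card (L v) \<ge> k)) \<longrightarrow>
      (\<exists>C. (\<forall>v\<in>V. C v \<in> L v) \<and> conflict_free E C))"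

end

theory Submission
  imports Defs "HOL-Library.FuncSet"
begin

text \<open>
  Let C be an optimal conflict-free colouring of H = (V, E) with
  k = \<chi>_cf(H) colours, let n = |V| and m = \<lfloor>k ln n\<rfloor> + 1.  Given lists of
  size at least m, shrink each to exactly m entries and look at all maps f from
  the union S of the lists to the k colours of C.  For a fixed vertex v, the maps
  that send no entry of L(v) to C(v) form a fraction (1 - 1/k)^m < 1/n of all
  maps, so by a union bound (counting) some f sends, for every v, some entry
  D(v) \<in> L(v) to C(v).  Then D(u) = D(v) forces C(u) = C(v), so D is again
  conflict-free.  Hence \<open>ch_cf\<close> \<le> m \<le> k ln n + 1.
\<close>

text \<open>If every colour class of D lies inside a colour class of C, then D inherits
  conflict-freeness from C: a uniquely C-coloured vertex is uniquely D-coloured.\<close>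

lemma conflict_free_refine:
  assumes "hypergraph V E" and "conflict_free E C"
    and refine: "\<And>u v. u \<in> V \<Longrightarrow> v \<in> V \<Longrightarrow> D u = D v \<Longrightarrow> C u = C v"
  shows "conflict_free E D"
  unfolding conflict_free_def
proof
  fix e assume e: "e \<in> E"
  then have eV: "e \<subseteq> V" using assms(1) unfolding hypergraph_def by auto
  obtain v where v: "v \<in> e" "\<forall>u\<in>e. C u = C v \<longrightarrow> u = v"
    using assms(2) e unfolding conflict_free_def by blast
  have "u = v" if "u \<in> e" "D u = D v" for u
    using refine[of u v] that v eV by blast
  then show "\<exists>v\<in>e. \<forall>u\<in>e. D u = D v \<longrightarrow> u = v" using v(1) by blast
qed

text \<open>A colouring that is injective on the vertices is conflict-free, because
  every hyperedge is a nonempty set of vertices.\<close>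

lemma injective_colouring_conflict_free:
  assumes "hypergraph V E" and "inj_on C V"
  shows "conflict_free E C"
  unfolding conflict_free_def
proof
  fix e assume "e \<in> E"
  then have "e \<noteq> {}" "e \<subseteq> V" using assms(1) unfolding hypergraph_def by auto
  then obtain v where "v \<in> e" by blast
  then show "\<exists>v\<in>e. \<forall>u\<in>e. C u = C v \<longrightarrow> u = v"
    using assms(2) \<open>e \<subseteq> V\<close> by (meson inj_onD subsetD)
qed

text \<open>Hence on a finite vertex set the minimum in \<open>chi_cf\<close> is attained: numbering
  the vertices 1, ..., n gives a conflict-free colouring by positive colours.\<close>

lemma chi_cf_attained:
  assumes "hypergraph V E" and "finite V"
  shows "\<exists>C. (\<forall>v\<in>V. C v > 0) \<and> card (C ` V) = chi_cf V E \<and> conflict_free E C"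
proof -
  obtain h where h: "bij_betw h V {0..<card V}"
    using ex_bij_betw_finite_nat[OF assms(2)] by blast
  define C0 where "C0 v = Suc (h v)" for v
  have "inj_on C0 V"
    using h unfolding C0_def bij_betw_def inj_on_def by simp
  then have "conflict_free E C0"
    by (rule injective_colouring_conflict_free[OF assms(1)])
  then have C0_witness: "\<exists>C. (\<forall>v\<in>V. C v > 0) \<and> card (C ` V) = card (C0 ` V) \<and> conflict_free E C"
    by (intro exI[of _ C0]) (simp add: C0_def)
  show ?thesis
    unfolding chi_cf_def by (rule LeastI_ex) (use C0_witness in blast)
qed

lemma card_maps_avoiding:
  assumes "finite S" and "T \<subseteq> S" and "finite K" and "c \<in> K"
  shows "card (PiE S (\<lambda>x. if x \<in> T then K - {c} else K))
           = (card K - 1) ^ card T * card K ^ (card S - card T)"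
proof -
  have "card (PiE S (\<lambda>x. if x \<in> T then K - {c} else K))
          = (\<Prod>x\<in>S. if x \<in> T then card (K - {c}) else card K)"
    using assms(1) by (simp add: card_PiE if_distrib)
  also have "\<dots> = (\<Prod>x\<in>S \<inter> {x. x \<in> T}. card (K - {c})) * (\<Prod>x\<in>S \<inter> - {x. x \<in> T}. card K)"
    using assms(1) by (rule prod.If_cases)
  also have "\<dots> = (\<Prod>x\<in>T. card (K - {c})) * (\<Prod>x\<in>S - T. card K)"
    using assms(2) by (simp add: Int_absorb1 Diff_eq Int_commute)
  finally show ?thesis
    using assms by (simp add: card_Diff_subset finite_subset)
qed

text \<open>If n (k - 1)^m < k^m, then for any n targets c v \<in> K and
  m-element sets L v \<subseteq> S there is one map f with f x = c v for some x \<in> L v,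
  simultaneously for every v: the maps failing at a fixed v are too few to cover
  all k^|S| maps.\<close>

lemma map_hitting_all_targets:
  fixes V :: "'a set" and K :: "'b set" and S :: "'c set"
  assumes "finite V" and "finite K" and "finite S"
    and target: "\<And>v. v \<in> V \<Longrightarrow> c v \<in> K"
    and lists: "\<And>v. v \<in> V \<Longrightarrow> L v \<subseteq> S \<and> card (L v) = m"
    and few: "card V * (card K - 1) ^ m < card K ^ m"
  shows "\<exists>f. \<forall>v\<in>V. \<exists>x\<in>L v. f x = c v"
proof (cases "V = {}")
  case False
  then obtain v0 where v0: "v0 \<in> V" by blast
  define k where "k = card K"
  define s where "s = card S"
  define Bad where "Bad v = PiE S (\<lambda>x. if x \<in> L v then K - {c v} else K)" for v
  have card_Bad: "card (Bad v) = (k - 1) ^ m * k ^ (s - m)" if "v \<in> V" for v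
    unfolding Bad_def k_def s_def
    using card_maps_avoiding[OF assms(3) _ assms(2) target[OF that], of "L v"] lists[OF that]
    by simp
  have "m \<le> s" using lists[OF v0] assms(3) unfolding s_def by (metis card_mono)
  have "c v0 \<in> K" using target[OF v0] .
  then have "k > 0" using assms(2) unfolding k_def by (auto simp: card_gt_0_iff)
  have "card (\<Union>v\<in>V. Bad v) \<le> (\<Sum>v\<in>V. card (Bad v))"
    using assms(1) by (rule card_UN_le)
  also have "\<dots> = (card V * (k - 1) ^ m) * k ^ (s - m)"
    using card_Bad by simp
  also have "\<dots> < k ^ m * k ^ (s - m)"
    using few \<open>k > 0\<close> unfolding k_def by simp
  also have "\<dots> = card (PiE S (\<lambda>_. K))"
    using \<open>m \<le> s\<close> assms(3) by (simp add: card_PiE k_def s_def flip: power_add)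
  finally have fewer: "card (\<Union>v\<in>V. Bad v) < card (PiE S (\<lambda>_. K))" .
  have "finite (\<Union>v\<in>V. Bad v)"
    using assms(1-3) unfolding Bad_def by (intro finite_UN_I finite_PiE) auto
  then have "\<not> PiE S (\<lambda>_. K) \<subseteq> (\<Union>v\<in>V. Bad v)"
    using fewer card_mono[of "\<Union>v\<in>V. Bad v" "PiE S (\<lambda>_. K)"] by linarith
  then obtain f where f: "f \<in> PiE S (\<lambda>_. K)" "\<And>v. v \<in> V \<Longrightarrow> f \<notin> Bad v" by blast
  have "\<exists>x\<in>L v. f x = c v" if "v \<in> V" for v
  proof (rule ccontr)
    assume "\<not> ?thesis"
    then have "f \<in> Bad v" using f(1) lists[OF that] unfolding Bad_def by (auto simp: PiE_iff)
    then show False using f(2) that by blast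
  qed
  then show ?thesis by blast
qed simp

text \<open>The numeric estimate behind the choice m = \<lfloor>k ln n\<rfloor> + 1: since
  (1 - 1/k)^m \<le> exp(-m/k) < exp(-ln n) = 1/n, we get n (k - 1)^m < k^m.\<close>

lemma few_bad_maps:
  fixes k n :: nat
  assumes k: "k \<ge> 1" and n: "n \<ge> 1"
  defines "m \<equiv> nat \<lfloor>real k * ln (real n)\<rfloor> + 1"
  shows "n * (k - 1) ^ m < k ^ m"
proof -
  have "real m > real k * ln (real n)"
    unfolding m_def using n k by (simp add: of_nat_nat) linarith
  then have m_over_k: "real m / real k > ln (real n)" using k by (simp add: field_simps)
  have "(real (k - 1) / real k) ^ m = (1 - 1 / real k) ^ m"
    using k by (simp add: field_simps of_nat_diff)
  also have "\<dots> \<le> exp (- (1 / real k)) ^ m"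
    using k exp_ge_add_one_self[of "- (1 / real k)"] by (intro power_mono) simp_all
  also have "\<dots> = exp (- (real m / real k))"
    by (simp flip: exp_of_nat_mult)
  also have "\<dots> < exp (- ln (real n))"
    using m_over_k by simp
  also have "\<dots> = 1 / real n"
    using n by (simp add: exp_minus inverse_eq_divide)
  finally have "real n * real (k - 1) ^ m < real k ^ m"
    using n k by (simp add: power_divide field_simps)
  then show ?thesis by (simp flip: of_nat_power of_nat_mult)
qed

lemma shrink_lists:
  assumes "\<forall>v\<in>V. infinite (L v) \<or> card (L v) \<ge> m"
  shows "\<exists>L'. \<forall>v\<in>V. L' v \<subseteq> L v \<and> card (L' v) = m \<and> finite (L' v)"
proof -
  have "\<exists>T. T \<subseteq> L v \<and> card T = m \<and> finite T" if "v \<in> V" for v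
  proof (cases "finite (L v)")
    case True
    then have "m \<le> card (L v)" using assms that by blast
    then obtain T where "T \<subseteq> L v" "card T = m" by (rule obtain_subset_with_card_n)
    then show ?thesis using True finite_subset by blast
  next
    case False
    then show ?thesis using infinite_arbitrarily_large by blast
  qed
  then show ?thesis by (rule bchoice[OF ballI])
qed

text \<open>Lists of size m suffice as soon as some conflict-free colouring C of a finite
  hypergraph with k colours satisfies n (k - 1)^m < k^m: map the shrunken lists onto
  the colours of C by the union bound and pick, at each vertex, an entry mapped to
  its C-colour; this refines C and so is conflict-free.\<close>

lemma ch_cf_le_from_colouring:
  assumes H: "hypergraph V E" and "finite V" and "conflict_free E C"
    and few: "card V * (card (C ` V) - 1) ^ m < card (C ` V) ^ m"
  shows "ch_cf V E \<le> m"
  unfolding ch_cf_def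
proof (rule Least_le, intro allI impI)
  fix L :: "'a \<Rightarrow> nat set"
  assume "\<forall>v\<in>V. L v \<subseteq> {0<..} \<and> (infinite (L v) \<or> m \<le> card (L v))"
  then obtain L' where L': "\<And>v. v \<in> V \<Longrightarrow> L' v \<subseteq> L v \<and> card (L' v) = m \<and> finite (L' v)"
    using shrink_lists[of V L m] by blast
  define S where "S = (\<Union>v\<in>V. L' v)"
  have "finite S" unfolding S_def using assms(2) L' by blast
  have "\<exists>f. \<forall>v\<in>V. \<exists>x\<in>L' v. f x = C v"
  proof (rule map_hitting_all_targets[OF assms(2) _ \<open>finite S\<close> _ _ few])
    show "finite (C ` V)" using assms(2) by blast
    show "C v \<in> C ` V" if "v \<in> V" for v using that by blast
    show "L' v \<subseteq> S \<and> card (L' v) = m" if "v \<in> V" for v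
      using L'[OF that] that unfolding S_def by blast
  qed
  then obtain f where f: "\<forall>v\<in>V. \<exists>x\<in>L' v. f x = C v" by blast
  define D where "D v = (SOME x. x \<in> L' v \<and> f x = C v)" for v
  have D: "D v \<in> L' v \<and> f (D v) = C v" if "v \<in> V" for v
  proof -
    have "\<exists>x. x \<in> L' v \<and> f x = C v" using f that by blast
    then show ?thesis unfolding D_def by (rule someI_ex)
  qed
  have "conflict_free E D"
  proof (rule conflict_free_refine[OF H assms(3)])
    fix u v assume "u \<in> V" "v \<in> V" "D u = D v"
    then show "C u = C v" using D[of u] D[of v] by simp
  qed
  moreover have "\<forall>v\<in>V. D v \<in> L v" using D L' by blast
  ultimately show "\<exists>D. (\<forall>v\<in>V. D v \<in> L v) \<and> conflict_free E D" by blast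
qed

theorem corollary6p3:
  fixes V :: "'a set" and E :: "'a set set"
  assumes "hypergraph V E" and "finite V" and "card V \<ge> 1"
  shows "real (ch_cf V E) \<le> real (chi_cf V E) * ln (real (card V)) + 1"
proof -
  obtain C where C: "card (C ` V) = chi_cf V E" "conflict_free E C"
    using chi_cf_attained[OF assms(1,2)] by blast
  define k where "k = chi_cf V E"
  define n where "n = card V"
  define m where "m = nat \<lfloor>real k * ln (real n)\<rfloor> + 1"
  have "n \<ge> 1" using assms(3) n_def by simp
  moreover have "k \<ge> 1"
  proof -
    have "C ` V \<noteq> {}" using assms(3) by auto
    then have "card (C ` V) > 0" using assms(2) by (simp add: card_gt_0_iff)
    then show ?thesis using C(1) unfolding k_def by simp
  qed
  ultimately have "ch_cf V E \<le> m"
    using ch_cf_le_from_colouring[OF assms(1,2) C(2)] few_bad_maps[of k n]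
    unfolding m_def n_def k_def C(1) by blast
  moreover have "real m \<le> real k * ln (real n) + 1"
    using \<open>n \<ge> 1\<close> unfolding m_def by (simp add: of_nat_nat)
  ultimately show ?thesis unfolding k_def n_def by linarith
qed

end
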